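(* Let $X=\{x_1,\ldots,x_n\}$ and $y$ be distinct variables, and let $V_n = c_X(\{x_1\},\ldots,\{x_n\},\{y\},\{\neg y\})$, i.e., $c_X$ applied to the formula consisting of the unit clauses $x_1,\ldots,x_n, y, \neg y$, where for a formula $F$ $c_X(F) = \{\gamma \vee \neg a \vee \neg b \mid \gamma \in F\} \cup \{\neg x_i \vee v_i \mid 1\le i\le n\} \cup \{x_i \vee v_i \mid 1\le i\le n\} \cup \{\neg v_1 \vee \cdots \vee \neg v_n \vee a\} \cup \{\neg v_1 \vee \cdots \vee \neg v_n \vee b\}$ with new variables $a,b,v_1,\ldots,v_n$. Then, with branching restricted to $X \cup \{y\}$, the minimum-size DPLL-Mono search trees of $V_n$ have size $2^n - 1$.
   Context: A CNF formula is a finite set of clauses; the empty clause is unsatisfiable. For a partial assignment $I$ (set of literals), $F|I$ is obtained by deleting clauses containing a literal true under $I$ and deleting false literals from remaining clauses. $Var(F)$ is the set of variables of $F$. A binary tree is empty $()$ or a triple $(x~T_1~T_2)$; its size is its number of nodes. $U(F)$ denotes the result of exhaustive unit propagation on $F$. For a set $B$ of variables, a DPLL-Mono search tree (DMST) of $F$ with branching restricted to $B$ is: $()$ if $U(F)$ contains the empty clause; otherwise $(x~T_1~T_2)$ with $x \in B \cap Var(U(F))$, $T_1$ a DMST of $U(F|\{\neg x\})$ and $T_2$ a DMST of $U(F|\{x\})$ (branching restricted to $B$). *)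

theory Defs
  imports Main "HOL-Library.Tree"
begin

datatype 'v lit = Pos 'v | Neg 'v

fun var :: "'v lit \<Rightarrow> 'v" where
  "var (Pos x) = x" | "var (Neg x) = x"

fun negate :: "'v lit \<Rightarrow> 'v lit" where
  "negate (Pos x) = Neg x" | "negate (Neg x) = Pos x"

type_synonym 'v clause = "'v lit set"
type_synonym 'v cnf = "'v clause set"

definition Vars :: "'v cnf \<Rightarrow> 'v set" where
  "Vars F = (\<Union>C\<in>F. var ` C)"

definition restrict :: "'v cnf \<Rightarrow> 'v lit set \<Rightarrow> 'v cnf" where
  "restrict F I = {C - negate ` I | C. C \<in> F \<and> C \<inter> I = {}}"

definition up_step :: "'v cnf \<Rightarrow> 'v cnf" where
  "up_step F = (if \<exists>l. {l} \<in> F then restrict F {SOME l. {l} \<in> F} else F)"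

text \<open>Exhaustive unit propagation. Every step with a unit clause removes its variable,
  so for finite formulas card (Vars F) steps suffice to reach a fixed point.\<close>
definition U :: "'v cnf \<Rightarrow> 'v cnf" where
  "U F = (up_step ^^ card (Vars F)) F"

text \<open>DPLL-Mono search trees with branching restricted to B.
  Node T1 x T2 corresponds to the triple (x T1 T2).\<close>
inductive dmst :: "'v set \<Rightarrow> 'v cnf \<Rightarrow> 'v tree \<Rightarrow> bool" for B where
  leaf: "{} \<in> U F \<Longrightarrow> dmst B F Leaf"
| node: "{} \<notin> U F \<Longrightarrow> x \<in> B \<inter> Vars (U F)
     \<Longrightarrow> dmst B (U (restrict (U F) {Neg x})) T1
     \<Longrightarrow> dmst B (U (restrict (U F) {Pos x})) T2
     \<Longrightarrow> dmst B F (Node T1 x T2)"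

definition cX :: "'v cnf \<Rightarrow> (nat \<Rightarrow> 'v) \<Rightarrow> nat \<Rightarrow> 'v \<Rightarrow> 'v \<Rightarrow> (nat \<Rightarrow> 'v) \<Rightarrow> 'v cnf" where
  "cX F x n a b v =
     {insert (Neg a) (insert (Neg b) g) | g. g \<in> F}
   \<union> {{Neg (x i), Pos (v i)} | i. i \<in> {1..n}}
   \<union> {{Pos (x i), Pos (v i)} | i. i \<in> {1..n}}
   \<union> {insert (Pos a) {Neg (v i) | i. i \<in> {1..n}}}
   \<union> {insert (Pos b) {Neg (v i) | i. i \<in> {1..n}}}"

definition Vn :: "(nat \<Rightarrow> 'v) \<Rightarrow> nat \<Rightarrow> 'v \<Rightarrow> 'v \<Rightarrow> 'v \<Rightarrow> (nat \<Rightarrow> 'v) \<Rightarrow> 'v cnf" where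
  "Vn x n y a b v = cX ({{Pos (x i)} | i. i \<in> {1..n}} \<union> {{Pos y}, {Neg y}}) x n a b v"

end

theory Submission
  imports Defs
begin

(* While some x_i is unassigned the formula has no unit clause, so unit propagation is idle.
   Assigning x_i either way makes v_i a unit, whose propagation removes \<not>v_i from the clauses
   a \<or> \<not>v_1 \<or> ... and b \<or> \<not>v_1 \<or> ...; only when all x_i are assigned do a and b become units,
   and then they conflict with \<not>a \<or> \<not>b (left by some x_i := false) or with the clauses
   y \<or> \<not>a \<or> \<not>b, \<not>y \<or> \<not>a \<or> \<not>b. Branching on y merely replaces the latter by \<not>a \<or> \<not>b, so every
   branch of a search tree has to assign all x_i, giving at least 2^n - 1 nodes, and branching on
   the x_i in any order gives exactly that many. *)

lemma restrict_insert:
  "restrict (insert C F) I =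
     (if C \<inter> I = {} then insert (C - negate ` I) (restrict F I) else restrict F I)"
  unfolding restrict_def by auto

lemma restrict_Un: "restrict (F \<union> G) I = restrict F I \<union> restrict G I"
  unfolding restrict_def by auto

lemma restrict_empty [simp]: "restrict {} I = {}"
  unfolding restrict_def by auto

lemma negate_neq [simp]: "negate l \<noteq> l" "l \<noteq> negate l"
  by (cases l; simp)+

lemma negate_negate [simp]: "negate (negate l) = l"
  by (cases l) auto

lemma var_eq_iff: "var m = var l \<longleftrightarrow> m = l \<or> m = negate l"
  by (cases m; cases l) auto

lemma var_negate [simp]: "var (negate l) = var l"
  by (cases l) auto

lemma empty_in_restrict_negate_unit: "{negate l} \<in> F \<Longrightarrow> {} \<in> restrict F {l}"
  unfolding restrict_def by (auto intro!: exI[of _ "{negate l}"])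

lemma Vars_Un [simp]: "Vars (F \<union> G) = Vars F \<union> Vars G"
  unfolding Vars_def by auto

lemma Vars_insert [simp]: "Vars (insert C F) = var ` C \<union> Vars F"
  unfolding Vars_def by auto

lemma Vars_empty [simp]: "Vars {} = {}"
  unfolding Vars_def by auto

lemma Vars_UN [simp]: "Vars (\<Union>i\<in>K. S i) = (\<Union>i\<in>K. Vars (S i))"
  unfolding Vars_def by auto

lemma restrict_unrelated:
  assumes "var l \<notin> Vars F"
  shows "restrict F {l} = F"
proof -
  have "l \<notin> C \<and> negate l \<notin> C" if "C \<in> F" for C
    using assms that unfolding Vars_def by (metis UN_I image_eqI var_negate)
  then show ?thesis
    unfolding restrict_def by auto
qed

lemma Vars_restrict_unit: "Vars (restrict F {l}) \<subseteq> Vars F - {var l}"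
  unfolding Vars_def restrict_def by (auto simp: var_eq_iff)

lemma finite_Vars: "finite F \<Longrightarrow> \<forall>C\<in>F. finite C \<Longrightarrow> finite (Vars F)"
  unfolding Vars_def by auto

lemma up_step_no_unit: "\<nexists>l. {l} \<in> F \<Longrightarrow> up_step F = F"
  unfolding up_step_def by auto

lemma up_step_unit:
  assumes "{l} \<in> F"
  obtains m where "{m} \<in> F" and "up_step F = restrict F {m}"
  using assms unfolding up_step_def by (metis (mono_tags, lifting) someI_ex)

lemma up_step_sole_unit:
  "{l} \<in> F \<Longrightarrow> (\<And>m. {m} \<in> F \<Longrightarrow> m = l) \<Longrightarrow> up_step F = restrict F {l}"
  by (metis up_step_unit)

lemma Vars_up_step: "Vars (up_step F) \<subseteq> Vars F"
  using Vars_restrict_unit[of F "SOME l. {l} \<in> F"] unfolding up_step_def by auto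

lemma finite_Vars_up_step: "finite (Vars F) \<Longrightarrow> finite (Vars (up_step F))"
  by (rule finite_subset[OF Vars_up_step])

lemma card_Vars_up_step_less:
  assumes "finite (Vars F)" and "{l} \<in> F"
  shows "card (Vars (up_step F)) < card (Vars F)"
proof -
  obtain m where "{m} \<in> F" and "up_step F = restrict F {m}"
    using assms(2) by (rule up_step_unit)
  moreover from \<open>{m} \<in> F\<close> have "var m \<in> Vars F"
    unfolding Vars_def by auto
  ultimately show ?thesis
    using Vars_restrict_unit[of F m] assms(1)
    by (metis card_Diff1_less card_mono finite_Diff le_less_trans)
qed

lemma funpow_fixpoint: "f z = z \<Longrightarrow> (f ^^ k) z = z"
  by (induction k) auto

lemma funpow_up_step_eq_U:
  "finite (Vars F) \<Longrightarrow> card (Vars F) \<le> k \<Longrightarrow> (up_step ^^ k) F = U F"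
proof (induction "card (Vars F)" arbitrary: F k rule: less_induct)
  case less
  show ?case
  proof (cases "\<exists>l. {l} \<in> F")
    case False
    then show ?thesis
      unfolding U_def by (simp add: funpow_fixpoint up_step_no_unit)
  next
    case True
    then obtain l where "{l} \<in> F" by blast
    define F' where "F' = up_step F"
    have fin: "finite (Vars F')"
      unfolding F'_def using less.prems(1) by (rule finite_Vars_up_step)
    have less': "card (Vars F') < card (Vars F)"
      unfolding F'_def using card_Vars_up_step_less[OF less.prems(1) \<open>{l} \<in> F\<close>] .
    have "(up_step ^^ j) F = U F'" if j: "card (Vars F) \<le> j" for j
    proof -
      obtain j' where j': "j = Suc j'" "card (Vars F') \<le> j'"
        using less' j by (cases j) auto
      then have "(up_step ^^ j) F = (up_step ^^ j') F'"
        unfolding F'_def by (simp add: funpow_Suc_right del: funpow.simps)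
      also have "\<dots> = U F'"
        using less.hyps[OF less' fin j'(2)] .
      finally show ?thesis .
    qed
    from this[OF less.prems(2)] this[OF order_refl] show ?thesis
      unfolding U_def by simp
  qed
qed

lemma U_up_step:
  assumes "finite (Vars F)"
  shows "U (up_step F) = U F"
proof (cases "\<exists>l. {l} \<in> F")
  case True
  then obtain l where "{l} \<in> F" by blast
  with assms have "card (Vars (up_step F)) < card (Vars F)"
    by (rule card_Vars_up_step_less)
  then obtain c where c: "card (Vars F) = Suc c" "card (Vars (up_step F)) \<le> c"
    by (cases "card (Vars F)") auto
  have "U F = (up_step ^^ c) (up_step F)"
    unfolding U_def c(1) by (simp add: funpow_Suc_right del: funpow.simps)
  also have "\<dots> = U (up_step F)"
    using funpow_up_step_eq_U[OF finite_Vars_up_step[OF assms] c(2)] .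
  finally show ?thesis by simp
qed (simp add: up_step_no_unit)

lemma up_step_U: "finite (Vars F) \<Longrightarrow> up_step (U F) = U F"
  using funpow_up_step_eq_U[of F "Suc (card (Vars F))"] by (simp add: U_def)

lemma U_idem: "finite (Vars F) \<Longrightarrow> U (U F) = U F"
  by (metis U_def funpow_fixpoint up_step_U)

lemma U_no_unit: "\<nexists>l. {l} \<in> F \<Longrightarrow> U F = F"
  unfolding U_def by (simp add: funpow_fixpoint up_step_no_unit)

lemma U_conflict:
  assumes "{} \<in> F"
  shows "{} \<in> U F"
proof -
  have "{} \<in> up_step G" if "{} \<in> G" for G :: "'v cnf"
    using that unfolding up_step_def restrict_def by auto
  then have "{} \<in> (up_step ^^ k) F" for k
    using assms by (induction k) auto
  then show ?thesis
    unfolding U_def by blast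
qed

lemma U_sole_unit:
  "finite (Vars F) \<Longrightarrow> {l} \<in> F \<Longrightarrow> (\<And>m. {m} \<in> F \<Longrightarrow> m = l) \<Longrightarrow> U F = U (restrict F {l})"
  by (metis U_up_step up_step_sole_unit)

lemma U_conflict_all_units:
  assumes "finite (Vars F)" and "{l} \<in> F" and "\<And>m. {m} \<in> F \<Longrightarrow> {} \<in> U (restrict F {m})"
  shows "{} \<in> U F"
proof -
  obtain m where "{m} \<in> F" and "up_step F = restrict F {m}"
    using assms(2) by (rule up_step_unit)
  then show ?thesis
    using U_up_step[OF assms(1)] assms(3) by metis
qed

lemma U_conflict_complementary_units:
  assumes "finite (Vars F)" and "{l} \<in> F" and "{negate l} \<in> F"
    and "\<And>m. {m} \<in> F \<Longrightarrow> m = l \<or> m = negate l"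
  shows "{} \<in> U F"
  using assms(1,2)
proof (rule U_conflict_all_units)
  fix m
  assume "{m} \<in> F"
  then have "{negate m} \<in> F"
    using assms(2-4) by fastforce
  then show "{} \<in> U (restrict F {m})"
    by (intro U_conflict empty_in_restrict_negate_unit)
qed

lemma U_conflict_guarded_unit:
  assumes "c \<noteq> y" and "hy \<or> hab"
  shows "{} \<in> U (insert {Pos c} ((if hy then {{Neg c, Pos y}, {Neg c, Neg y}} else {})
                                  \<union> (if hab then {{Neg c}} else {})))" (is "{} \<in> U ?F")
proof -
  have fin: "finite (Vars ?F)"
    by (intro finite_Vars) auto
  show ?thesis
  proof (cases hab)
    case True
    show ?thesis
      by (rule U_conflict_complementary_units[OF fin, of "Pos c"])
        (use True assms(1) in \<open>auto split: if_splits simp: doubleton_eq_iff\<close>)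
  next
    case False
    with assms have hy by blast
    have "U ?F = U (restrict ?F {Pos c})"
      by (rule U_sole_unit[OF fin]) (use False assms(1) in \<open>auto split: if_splits simp: doubleton_eq_iff\<close>)
    also have "restrict ?F {Pos c} = {{Pos y}, {Neg y}}"
      using False \<open>hy\<close> assms(1) by (auto simp: restrict_insert insert_Diff_if)
    finally show ?thesis
      using U_conflict_complementary_units[of "{{Pos y}, {Neg y}}" "Pos y"]
      by (simp add: finite_Vars)
  qed
qed

lemma dmst_U_cong: "dmst B F T \<Longrightarrow> U F' = U F \<Longrightarrow> dmst B F' T"
  by (erule dmst.cases) (auto intro: dmst.intros)

locale Vn_variables =
  fixes x v :: "nat \<Rightarrow> 'v" and n :: nat and y a b :: 'v
  assumes inj_x: "inj_on x {1..n}" and inj_v: "inj_on v {1..n}"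
    and y_notin_x: "y \<notin> x ` {1..n}"
    and v_fresh: "v ` {1..n} \<inter> (x ` {1..n} \<union> {y, a, b}) = {}"
    and a_neq_b: "a \<noteq> b" and a_fresh: "a \<notin> x ` {1..n} \<union> {y}" and b_fresh: "b \<notin> x ` {1..n} \<union> {y}"
begin

abbreviation N :: "nat set" where "N \<equiv> {1..n}"

lemma x_eq_iff [simp]: "i \<in> N \<Longrightarrow> j \<in> N \<Longrightarrow> x i = x j \<longleftrightarrow> i = j"
  using inj_x by (meson inj_on_eq_iff)

lemma v_eq_iff [simp]: "i \<in> N \<Longrightarrow> j \<in> N \<Longrightarrow> v i = v j \<longleftrightarrow> i = j"
  using inj_v by (meson inj_on_eq_iff)

lemma fresh_vars [simp]:
  assumes "i \<in> N" and "j \<in> N"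
  shows "v i \<noteq> x j" "v i \<noteq> y" "v i \<noteq> a" "v i \<noteq> b" "x i \<noteq> y" "x i \<noteq> a" "x i \<noteq> b"
  using assms v_fresh y_notin_x a_fresh b_fresh by blast+

lemma a_b_y_distinct [simp]: "a \<noteq> b" "y \<noteq> a" "y \<noteq> b"
  using a_neq_b a_fresh b_fresh by blast+

lemmas fresh_vars_sym [simp] = fresh_vars[THEN not_sym]
lemmas a_b_y_distinct_sym [simp] = a_b_y_distinct[THEN not_sym]

definition x_clauses :: "nat \<Rightarrow> 'v cnf" where
  "x_clauses i = {{Neg a, Neg b, Pos (x i)}, {Neg (x i), Pos (v i)}, {Pos (x i), Pos (v i)}}"

definition ab_clauses :: "nat set \<Rightarrow> 'v cnf" where
  "ab_clauses W = {insert (Pos a) ((\<lambda>i. Neg (v i)) ` W), insert (Pos b) ((\<lambda>i. Neg (v i)) ` W)}"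

definition guarded :: "bool \<Rightarrow> bool \<Rightarrow> 'v cnf" where
  "guarded hy hab =
     (if hy then {{Neg a, Neg b, Pos y}, {Neg a, Neg b, Neg y}} else {})
   \<union> (if hab then {{Neg a, Neg b}} else {})"

(* The formula reached from V_n after branching on the x_i with i outside K and propagating:
   W indexes the literals \<not>v_i still present in the two a/b-clauses, hy records that y has not
   been assigned, and hab that some x_i was set to false, which leaves the clause \<not>a \<or> \<not>b. *)
definition state :: "nat set \<Rightarrow> nat set \<Rightarrow> bool \<Rightarrow> bool \<Rightarrow> 'v cnf" where
  "state K W hy hab = (\<Union>i\<in>K. x_clauses i) \<union> ab_clauses W \<union> guarded hy hab"

lemma Vn_eq_state: "Vn x n y a b v = state N N True False"
proof -
  have units: "{insert (Neg a) (insert (Neg b) g) | g. g \<in> {{Pos (x i)} | i. i \<in> N} \<union> {{Pos y}, {Neg y}}}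
    = (\<lambda>i. {Neg a, Neg b, Pos (x i)}) ` N \<union> {{Neg a, Neg b, Pos y}, {Neg a, Neg b, Neg y}}"
    by blast
  have "(\<Union>i\<in>N. x_clauses i)
    = (\<lambda>i. {Neg a, Neg b, Pos (x i)}) ` N \<union> {{Neg (x i), Pos (v i)} | i. i \<in> N}
      \<union> {{Pos (x i), Pos (v i)} | i. i \<in> N}"
    unfolding x_clauses_def by blast
  moreover have "{Neg (v i) | i. i \<in> N} = (\<lambda>i. Neg (v i)) ` N"
    by blast
  ultimately show ?thesis
    unfolding Vn_def cX_def state_def ab_clauses_def guarded_def units by auto
qed

lemma Vars_x_clauses: "Vars (x_clauses i) = {a, b, x i, v i}"
  unfolding x_clauses_def by auto

lemma Vars_ab_clauses: "Vars (ab_clauses W) = {a, b} \<union> v ` W"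
  unfolding ab_clauses_def by (auto simp: image_image)

lemma Vars_guarded: "Vars (guarded hy hab) \<subseteq> {a, b, y}"
  unfolding guarded_def by auto

lemma Vars_state:
  "Vars (state K W hy hab) = x ` K \<union> v ` K \<union> {a, b} \<union> v ` W \<union> (if hy then {y} else {})"
  unfolding state_def guarded_def by (auto simp: Vars_x_clauses Vars_ab_clauses)

lemma finite_Vars_state: "finite K \<Longrightarrow> finite W \<Longrightarrow> finite (Vars (state K W hy hab))"
  unfolding Vars_state by simp

lemma empty_notin_state: "{} \<notin> state K W hy hab"
  unfolding state_def x_clauses_def ab_clauses_def guarded_def by auto

lemma unit_notin_state: "K \<subseteq> N \<Longrightarrow> W \<noteq> {} \<Longrightarrow> {l} \<notin> state K W hy hab"
  unfolding state_def x_clauses_def ab_clauses_def guarded_def by (auto simp: doubleton_eq_iff)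

lemma U_idem_state: "finite K \<Longrightarrow> finite W \<Longrightarrow> U (U (state K W hy hab)) = U (state K W hy hab)"
  by (simp add: U_idem finite_Vars_state)

lemma U_state: "K \<subseteq> N \<Longrightarrow> K \<noteq> {} \<Longrightarrow> U (state K K hy hab) = state K K hy hab"
  by (simp add: U_no_unit unit_notin_state)

lemma restrict_state_Neg_y:
  assumes "K \<subseteq> N" and "W \<subseteq> N"
  shows "restrict (state K W True hab) {Neg y} = state K W False True"
proof -
  have "y \<notin> Vars (\<Union>i\<in>K. x_clauses i)" and "y \<notin> Vars (ab_clauses W)"
    using assms by (auto simp: Vars_x_clauses Vars_ab_clauses)
  then show ?thesis
    unfolding state_def restrict_Un by (auto simp: restrict_unrelated guarded_def restrict_insert)
qed

lemma restrict_state_x: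
  assumes "i \<notin> K" and "insert i K \<subseteq> N" and "W \<subseteq> N"
  shows "restrict (state (insert i K) W hy hab) {Pos (x i)} = insert {Pos (v i)} (state K W hy hab)"
    and "restrict (state (insert i K) W hy hab) {Neg (x i)} = insert {Pos (v i)} (state K W hy True)"
proof -
  have "x i \<notin> Vars (\<Union>j\<in>K. x_clauses j) \<union> Vars (ab_clauses W) \<union> Vars (guarded hy hab)"
    using assms Vars_guarded[of hy hab] by (auto simp: Vars_x_clauses Vars_ab_clauses)
  moreover have "restrict (x_clauses i) {Pos (x i)} = {{Pos (v i)}}"
    and "restrict (x_clauses i) {Neg (x i)} = {{Neg a, Neg b}, {Pos (v i)}}"
    using assms unfolding x_clauses_def by (auto simp: restrict_insert insert_Diff_if)
  ultimately show "restrict (state (insert i K) W hy hab) {Pos (x i)} = insert {Pos (v i)} (state K W hy hab)"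
    and "restrict (state (insert i K) W hy hab) {Neg (x i)} = insert {Pos (v i)} (state K W hy True)"
    unfolding state_def restrict_Un UN_insert by (auto simp: restrict_unrelated guarded_def)
qed

lemma restrict_state_v:
  assumes "i \<notin> K" and "i \<in> N" and "K \<subseteq> N" and "W \<subseteq> N"
  shows "restrict (insert {Pos (v i)} (state K W hy hab)) {Pos (v i)} = state K (W - {i}) hy hab"
proof -
  have "v i \<notin> Vars (\<Union>j\<in>K. x_clauses j) \<union> Vars (guarded hy hab)"
    using assms Vars_guarded[of hy hab] by (auto simp: Vars_x_clauses)
  moreover have "(\<lambda>j. Neg (v j)) ` W - {Neg (v i)} = (\<lambda>j. Neg (v j)) ` (W - {i})"
    using assms by auto
  then have "restrict (ab_clauses W) {Pos (v i)} = ab_clauses (W - {i})"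
    unfolding ab_clauses_def using assms by (auto simp: restrict_insert)
  ultimately show ?thesis
    unfolding state_def restrict_Un restrict_insert by (simp add: restrict_unrelated)
qed

lemma U_restrict_state_x:
  assumes "i \<notin> K" and "insert i K \<subseteq> N" and "finite K"
  shows "U (restrict (state (insert i K) (insert i K) hy hab) {Pos (x i)}) = U (state K K hy hab)"
    and "U (restrict (state (insert i K) (insert i K) hy hab) {Neg (x i)}) = U (state K K hy True)"
proof -
  have "U (insert {Pos (v i)} (state K (insert i K) hy hab')) = U (state K K hy hab')" for hab'
  proof -
    have "U (insert {Pos (v i)} (state K (insert i K) hy hab'))
        = U (restrict (insert {Pos (v i)} (state K (insert i K) hy hab')) {Pos (v i)})"
      using assms unit_notin_state[of K "insert i K"]
      by (intro U_sole_unit) (auto simp: finite_Vars_state)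
    also have "\<dots> = U (state K K hy hab')"
      using assms restrict_state_v[of i K "insert i K"] by simp
    finally show ?thesis .
  qed
  then show "U (restrict (state (insert i K) (insert i K) hy hab) {Pos (x i)}) = U (state K K hy hab)"
    and "U (restrict (state (insert i K) (insert i K) hy hab) {Neg (x i)}) = U (state K K hy True)"
    using assms by (simp_all add: restrict_state_x)
qed

lemma U_state_conflict:
  assumes "hy \<or> hab"
  shows "{} \<in> U (state {} {} hy hab)"
proof -
  have state_empty: "state {} {} hy hab = insert {Pos a} (insert {Pos b} (guarded hy hab))"
    unfolding state_def ab_clauses_def by auto
  have restrict_a_b: "restrict (state {} {} hy hab) {Pos c}
      = insert {Pos d} ((if hy then {{Neg d, Pos y}, {Neg d, Neg y}} else {})
                        \<union> (if hab then {{Neg d}} else {}))"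
    if "c = a \<and> d = b \<or> c = b \<and> d = a" for c d
    using that unfolding state_empty guarded_def by (auto simp: restrict_insert insert_Diff_if)
  show ?thesis
  proof (rule U_conflict_all_units)
    show "finite (Vars (state {} {} hy hab))"
      by (simp add: finite_Vars_state)
    show "{Pos a} \<in> state {} {} hy hab"
      unfolding state_empty by simp
    fix m
    assume "{m} \<in> state {} {} hy hab"
    then consider "m = Pos a" | "m = Pos b"
      unfolding state_empty guarded_def by (auto simp: doubleton_eq_iff split: if_splits)
    then show "{} \<in> U (restrict (state {} {} hy hab) {m})"
      by cases (use assms in \<open>simp_all add: restrict_a_b U_conflict_guarded_unit\<close>)
  qed
qed

lemma branch_var_state:
  assumes "z \<in> x ` N \<union> {y}" and "z \<in> Vars (state K W hy hab)" and "K \<subseteq> N" and "W \<subseteq> N"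
  obtains "z = y" and hy | j where "j \<in> K" and "z = x j"
  using assms unfolding Vars_state by (auto split: if_splits)

lemma size_dmst_state_ge:
  assumes "dmst (x ` N \<union> {y}) F T" and "U F = U (state K K hy hab)"
    and "K \<subseteq> N" and "finite K" and "hy \<or> hab"
  shows "2 ^ card K - 1 \<le> size T"
  using assms
proof (induction arbitrary: K hy hab rule: dmst.induct)
  case (leaf F)
  then have "K = {}"
    using U_state empty_notin_state by metis
  then show ?case by simp
next
  case (node F z T1 T2)
  have "K \<noteq> {}"
    using node.hyps(1) node.prems(1,4) U_state_conflict by auto
  then have UF: "U F = state K K hy hab"
    using node.prems(1,2) U_state by simp
  have z: "z \<in> x ` N \<union> {y}" "z \<in> Vars (state K K hy hab)"
    using node.hyps(2) UF by auto
  consider "z = y" hy | j where "j \<in> K" "z = x j"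
    by (rule branch_var_state[OF z node.prems(2) node.prems(2)])
  then show ?case
  proof cases
    case 1
    then have "U (restrict (U F) {Neg z}) = U (state K K False True)"
      using UF node.prems(2) restrict_state_Neg_y by simp
    then have "2 ^ card K - 1 \<le> size T1"
      using node.IH(1) node.prems(2,3) U_idem_state by simp
    then show ?thesis by simp
  next
    case (2 j)
    define K' where "K' = K - {j}"
    have K: "K = insert j K'" "j \<notin> K'" "insert j K' \<subseteq> N" "finite K'"
      using 2 node.prems(2,3) unfolding K'_def by auto
    have "2 ^ card K' - 1 \<le> size T1"
      using node.IH(1)[of K' hy True] U_restrict_state_x(2)[OF K(2-4)] UF K U_idem_state
      by (simp add: \<open>z = x j\<close>)
    moreover have "2 ^ card K' - 1 \<le> size T2"
      using node.IH(2)[of K' hy hab] U_restrict_state_x(1)[OF K(2-4)] UF K U_idem_state node.prems(4)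
      by (simp add: \<open>z = x j\<close>)
    moreover have "card K = Suc (card K')"
      using K by simp
    ultimately show ?thesis
      by simp
  qed
qed

lemma ex_dmst_state_size:
  assumes "finite K" and "K \<subseteq> N" and "hy \<or> hab"
  shows "\<exists>T. dmst (x ` N \<union> {y}) (state K K hy hab) T \<and> size T = 2 ^ card K - 1"
  using assms
proof (induction K arbitrary: hab rule: finite_induct)
  case empty
  then have "dmst (x ` N \<union> {y}) (state {} {} hy hab) Leaf"
    by (intro dmst.leaf U_state_conflict)
  then show ?case by auto
next
  case (insert i K)
  let ?S = "state (insert i K) (insert i K) hy hab"
  have dmst_U: "dmst (x ` N \<union> {y}) (U (state K K hy hab')) T"
    if "dmst (x ` N \<union> {y}) (state K K hy hab') T" for hab' T
    using that by (rule dmst_U_cong) (simp add: U_idem_state insert.hyps(1))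
  obtain T1 where T1: "dmst (x ` N \<union> {y}) (state K K hy True) T1" "size T1 = 2 ^ card K - 1"
    using insert.IH[of True] insert.prems(1) by blast
  obtain T2 where T2: "dmst (x ` N \<union> {y}) (state K K hy hab) T2" "size T2 = 2 ^ card K - 1"
    using insert.IH[of hab] insert.prems by blast
  have US: "U ?S = ?S"
    using insert.prems(1) by (intro U_state) auto
  have "dmst (x ` N \<union> {y}) ?S (Node T1 (x i) T2)"
  proof (rule dmst.node)
    show "{} \<notin> U ?S" and "x i \<in> (x ` N \<union> {y}) \<inter> Vars (U ?S)"
      using US insert.prems(1) by (auto simp: empty_notin_state Vars_state)
    show "dmst (x ` N \<union> {y}) (U (restrict (U ?S) {Neg (x i)})) T1"
      and "dmst (x ` N \<union> {y}) (U (restrict (U ?S) {Pos (x i)})) T2"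
      using insert T1(1) T2(1) US U_restrict_state_x dmst_U by simp_all
  qed
  moreover have "size (Node T1 (x i) T2) = 2 ^ card (insert i K) - 1"
  proof -
    obtain p where "(2::nat) ^ card K = Suc p"
      using not0_implies_Suc by fastforce
    then show ?thesis
      using T1(2) T2(2) insert.hyps by simp
  qed
  ultimately show ?case by blast
qed

end

theorem corollary4:
  fixes x v :: "nat \<Rightarrow> 'v" and n :: nat and y a b :: 'v
  assumes "inj_on x {1..n}" and "inj_on v {1..n}"
    and "y \<notin> x ` {1..n}"
    and "v ` {1..n} \<inter> (x ` {1..n} \<union> {y, a, b}) = {}"
    and "a \<noteq> b" and "a \<notin> x ` {1..n} \<union> {y}" and "b \<notin> x ` {1..n} \<union> {y}"
  shows "(\<exists>T. dmst (x ` {1..n} \<union> {y}) (Vn x n y a b v) T \<and> size T = 2 ^ n - 1)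
       \<and> (\<forall>T. dmst (x ` {1..n} \<union> {y}) (Vn x n y a b v) T \<longrightarrow> 2 ^ n - 1 \<le> size T)"
proof -
  interpret Vn_variables x v n y a b
    using assms by unfold_locales
  show ?thesis
    using ex_dmst_state_size[of N True False] size_dmst_state_ge[of _ _ N True False]
    unfolding Vn_eq_state by auto
qed

end
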